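(* Let $\alpha>0$. (i) For all $\Delta>0$, $$\int_0^{1/(1+\Delta)}\frac{\alpha^\alpha}{\Gamma(\alpha)}\frac{e^{-\alpha/u}}{u^{1+\alpha}}du\le\int_1^\infty\alpha^{1/2}\Delta\exp\Big\{-\frac{t^2}{4}(\alpha^{1/2}\Delta)^2\Big\}dt+\int_1^\infty(\alpha\Delta)^{1/2}\exp\Big(-\frac{t}{4}\alpha\Delta\Big)dt.$$ (ii) For all $\Delta>0$ and all $K>1+\Delta$, $$\int_{1+\Delta}^K\frac{\alpha^\alpha}{\Gamma(\alpha)}\frac{e^{-\alpha/u}}{u^{1+\alpha}}du\le K\int_{-\infty}^{-1}|t|\,\alpha^{1/2}\frac{\log(1+\Delta)}{1+\log K}\exp\Big[-\frac{|t|^2}{2}\alpha\frac{\{\log(1+\Delta)\}^2}{(1+\log K)^2}\Big]dt.$$ (iii) For all $K>0$, $$\int_K^\infty\frac{\alpha^\alpha}{\Gamma(\alpha)}\frac{e^{-\alpha/u}}{u^{1+\alpha}}du\le\min\Big\{\frac{\alpha^\alpha}{\Gamma(\alpha+1)}\frac{1}{K^\alpha},\ \frac{1}{\alpha^{1/2}}\frac{1}{(K/e)^\alpha}\Big\}.$$ *)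

theory Defs
  imports "HOL-Analysis.Analysis"
begin

definition invgamma_dens :: "real \<Rightarrow> real \<Rightarrow> real" where
  "invgamma_dens \<alpha> u = \<alpha> powr \<alpha> / Gamma \<alpha> * (exp (- \<alpha> / u) / u powr (1 + \<alpha>))"

end

theory Submission
  imports Defs "HOL-Real_Asymp.Real_Asymp"
begin

(* On the logarithmic scale the inverse-gamma density f is explicit,
   f(e^y) e^y = f(1) exp(-alpha (e^-y + y - 1)), and the Stirling-type bound
   Gamma(alpha + 1) e^alpha >= alpha^alpha sqrt alpha gives f(1) <= sqrt alpha.
   For (ii) substitute u = exp(s log(1 + Delta)) and use e^-y + y - 1 >= y^2/(2(1 + y));
   for (i) substitute u = 1/(1 + w) with w = s Delta and use w - log(1 + w) >= w^2/(2(1 + w)),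
   which is at least w^2/4 for w <= 1 and at least w/4 for w >= 1.
   For (iii), drop the factor exp(-alpha/u) <= 1 and integrate u^(-1-alpha). *)

section \<open>Elementary inequalities\<close>

lemma ln_add_one_ge:
  fixes x :: real
  assumes "0 \<le> x"
  shows "x - x^2/2 \<le> ln (1 + x)"
proof -
  have "(\<lambda>x. x - x^2/2 - ln (1 + x)) x \<le> (\<lambda>x. x - x^2/2 - ln (1 + x)) 0"
  proof (rule DERIV_nonpos_imp_nonincreasing[OF assms])
    fix y :: real assume "0 \<le> y"
    then show "\<exists>d. DERIV (\<lambda>x. x - x^2/2 - ln (1 + x)) y :> d \<and> d \<le> 0"
      by (intro exI[of _ "1 - y - 1/(1 + y)"]) (auto intro!: derivative_eq_intros simp: field_simps)
  qed
  then show ?thesis by simp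
qed

lemma exp_minus_le_quadratic:
  fixes x :: real
  assumes "0 \<le> x"
  shows "exp (-x) \<le> 1 - x + x^2/2"
proof -
  have "(\<lambda>x. exp (-x) - (1 - x + x^2/2)) x \<le> (\<lambda>x. exp (-x) - (1 - x + x^2/2)) 0"
  proof (rule DERIV_nonpos_imp_nonincreasing[OF assms])
    fix y :: real
    show "\<exists>d. DERIV (\<lambda>x. exp (-x) - (1 - x + x^2/2)) y :> d \<and> d \<le> 0"
      using exp_ge_add_one_self[of "-y"]
      by (intro exI[of _ "1 - y - exp (-y)"]) (auto intro!: derivative_eq_intros)
  qed
  then show ?thesis by simp
qed

lemma exp_minus_ge_cubic:
  fixes x :: real
  assumes "0 \<le> x"
  shows "1 - x + x^2/2 - x^3/6 \<le> exp (-x)"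
proof -
  have "(\<lambda>x. 1 - x + x^2/2 - x^3/6 - exp (-x)) x \<le> (\<lambda>x. 1 - x + x^2/2 - x^3/6 - exp (-x)) 0"
  proof (rule DERIV_nonpos_imp_nonincreasing[OF assms])
    fix y :: real assume "0 \<le> y"
    then show "\<exists>d. DERIV (\<lambda>x. 1 - x + x^2/2 - x^3/6 - exp (-x)) y :> d \<and> d \<le> 0"
      using exp_minus_le_quadratic[of y]
      by (intro exI[of _ "exp (-y) - (1 - y + y^2/2)"]) (auto intro!: derivative_eq_intros)
  qed
  then show ?thesis by simp
qed

lemma ln_le_half_diff_inverse:
  fixes x :: real
  assumes "1 \<le> x"
  shows "ln x \<le> (x - 1/x)/2"
proof -
  have "(\<lambda>x. (x - 1/x)/2 - ln x) 1 \<le> (\<lambda>x. (x - 1/x)/2 - ln x) x"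
  proof (rule DERIV_nonneg_imp_nondecreasing[OF assms])
    fix y :: real assume "1 \<le> y"
    then have "DERIV (\<lambda>x. (x - 1/x)/2 - ln x) y :> (1 - 1/y)^2/2"
      by (auto intro!: derivative_eq_intros simp: field_simps power2_eq_square)
    then show "\<exists>d. DERIV (\<lambda>x. (x - 1/x)/2 - ln x) y :> d \<and> 0 \<le> d"
      by auto
  qed
  then show ?thesis by simp
qed

lemma exp_minus_add_self_ge:
  fixes y :: real
  assumes "0 \<le> y"
  shows "y^2/(2*(1 + y)) \<le> exp (-y) + y - 1"
proof -
  have "(\<lambda>y. 2 - y^2 - 2*(1 + y)*exp (-y)) y \<le> (\<lambda>y. 2 - y^2 - 2*(1 + y)*exp (-y)) 0"
  proof (rule DERIV_nonpos_imp_nonincreasing[OF assms])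
    fix z :: real assume "0 \<le> z"
    then have "z * exp (-z) \<le> z" by (simp add: mult_left_le)
    then show "\<exists>d. DERIV (\<lambda>y. 2 - y^2 - 2*(1 + y)*exp (-y)) z :> d \<and> d \<le> 0"
      by (intro exI[of _ "- 2*z*(1 - exp (-z))"]) (auto intro!: derivative_eq_intros simp: field_simps)
  qed
  then show ?thesis using assms by (simp add: field_simps power2_eq_square)
qed

lemma divide_le_sqrt:
  fixes d x :: real
  assumes "0 \<le> d" "1 + d \<le> x"
  shows "d / x \<le> sqrt d"
proof -
  have "d \<le> (1 + d)^2"
    using assms zero_le_power2[of d] by (simp add: power2_sum)
  then have "sqrt d \<le> x"
    using real_le_lsqrt[of "1 + d" d] assms by simp
  then have "d \<le> sqrt d * x"
    using assms mult_left_mono[of "sqrt d" x "sqrt d"] by simp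
  then show ?thesis
    using assms by (simp add: divide_le_eq)
qed

lemma powr_div_exp_ge_gaussian:
  fixes \<alpha> t :: real
  assumes "0 < \<alpha>" "\<alpha> \<le> t"
  shows "\<alpha> powr \<alpha> * exp (-\<alpha>) * exp (-((t - \<alpha>)^2/(2*\<alpha>))) \<le> t powr \<alpha> / exp t"
proof -
  define x where "x = (t - \<alpha>)/\<alpha>"
  have x: "0 \<le> x" "t = \<alpha> * (1 + x)"
    using assms by (auto simp: x_def field_simps)
  have exponent: "-\<alpha> + -((t - \<alpha>)^2/(2*\<alpha>)) = \<alpha> * (x - x^2/2) - t"
    using assms by (simp add: x(2) field_simps power2_eq_square)
  have "\<alpha> powr \<alpha> * exp (-\<alpha>) * exp (-((t - \<alpha>)^2/(2*\<alpha>))) = \<alpha> powr \<alpha> * exp (\<alpha> * (x - x^2/2) - t)"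
    by (simp only: mult.assoc flip: exp_add exponent)
  also have "\<dots> = \<alpha> powr \<alpha> * exp (\<alpha> * (x - x^2/2)) / exp t"
    by (simp add: exp_diff)
  also have "\<dots> \<le> \<alpha> powr \<alpha> * exp (\<alpha> * ln (1 + x)) / exp t"
    using ln_add_one_ge[OF x(1)] assms by (auto intro!: divide_right_mono mult_left_mono)
  also have "\<dots> = t powr \<alpha> / exp t"
    using x assms by (simp add: powr_mult powr_def[of "1 + x"] mult.commute)
  finally show ?thesis .
qed

section \<open>A lower bound for the Gamma function\<close>

text \<open>A Stirling-type lower bound: integrate the Taylor polynomial of degree 6 of the Gaussian
  minorant of the integrand \<open>t\<^sup>\<alpha> e\<^sup>-\<^sup>t\<close> over \<open>[\<alpha>, \<alpha> + 3/2 \<surd>\<alpha>]\<close>.\<close>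
lemma Gamma_plus_one_ge:
  fixes \<alpha> :: real
  assumes "0 < \<alpha>"
  shows "\<alpha> powr \<alpha> * exp (-\<alpha>) * sqrt \<alpha> \<le> Gamma (\<alpha> + 1)"
proof -
  define s where "s = sqrt \<alpha>"
  define c where "c = \<alpha> powr \<alpha> * exp (-\<alpha>)"
  define b where "b = \<alpha> + 3/2 * s"
  define P where "P u = 1 - u^2/2 + u^4/8 - u^6/48" for u :: real
  define R where "R u = u - u^3/6 + u^5/40 - u^7/336" for u :: real
  have P_le: "P u \<le> exp (-(u^2/2))" for u
    using exp_minus_ge_cubic[of "u^2/2"] by (simp add: P_def power_divide flip: power_mult)
  have s: "0 < s" "s^2 = \<alpha>" and c: "0 < c"
    using assms by (auto simp: s_def c_def)
  have "((\<lambda>t. c * P ((t - \<alpha>)/s)) has_integral (c * s * R ((b - \<alpha>)/s) - c * s * R ((\<alpha> - \<alpha>)/s))) {\<alpha>..b}"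
  proof (rule fundamental_theorem_of_calculus)
    show "\<alpha> \<le> b" using s by (simp add: b_def)
    show "((\<lambda>t. c * s * R ((t - \<alpha>)/s)) has_vector_derivative c * P ((t - \<alpha>)/s)) (at t within {\<alpha>..b})" for t
      unfolding P_def R_def has_real_derivative_iff_has_vector_derivative[symmetric] using s
      by (auto intro!: derivative_eq_intros simp: field_simps power_divide eval_nat_numeral)
  qed
  moreover have "c * s * R ((b - \<alpha>)/s) - c * s * R ((\<alpha> - \<alpha>)/s) = c * s * R (3/2)"
    using s by (simp add: b_def R_def)
  ultimately have poly: "((\<lambda>t. c * P ((t - \<alpha>)/s)) has_integral c * s * R (3/2)) {\<alpha>..b}"
    by simp
  have Gamma: "((\<lambda>t. t powr \<alpha> / exp t) has_integral Gamma (\<alpha> + 1)) {0..}"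
    using Gamma_integral_real[of "\<alpha> + 1"] assms by simp
  have integrable: "(\<lambda>t. t powr \<alpha> / exp t) integrable_on {\<alpha>..b}"
    using assms by (intro integrable_continuous_interval continuous_intros) auto
  have minorant: "c * P ((t - \<alpha>)/s) \<le> t powr \<alpha> / exp t" if "t \<in> {\<alpha>..b}" for t
  proof -
    have "((t - \<alpha>)/s)^2/2 = (t - \<alpha>)^2/(2*\<alpha>)"
      using s by (simp add: power_divide)
    then have "P ((t - \<alpha>)/s) \<le> exp (-((t - \<alpha>)^2/(2*\<alpha>)))"
      using P_le by metis
    then have "c * P ((t - \<alpha>)/s) \<le> c * exp (-((t - \<alpha>)^2/(2*\<alpha>)))"
      using c by simp
    also have "\<dots> \<le> t powr \<alpha> / exp t"
      using powr_div_exp_ge_gaussian[OF assms, of t] that by (simp add: c_def)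
    finally show ?thesis .
  qed
  have "1 \<le> R (3/2)"
    by (simp add: R_def power_divide)
  then have "c * s \<le> c * s * R (3/2)"
    using c s by simp
  also have "\<dots> \<le> integral {\<alpha>..b} (\<lambda>t. t powr \<alpha> / exp t)"
    using integrable minorant by (intro has_integral_le[OF poly integrable_integral]) auto
  also have "\<dots> \<le> integral {0..} (\<lambda>t. t powr \<alpha> / exp t)"
    using assms Gamma integrable by (intro integral_subset_le) (auto simp: has_integral_integrable)
  also have "\<dots> = Gamma (\<alpha> + 1)"
    using Gamma by (rule integral_unique)
  finally show ?thesis
    by (simp add: c_def s_def)
qed

lemma Gamma_plus1_pos:
  fixes x :: real
  assumes "0 < x"
  shows "Gamma (x + 1) = x * Gamma x"
  using assms by (intro Gamma_plus1) (auto dest: nonpos_Ints_nonpos)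

section \<open>Integrals on the real line\<close>

lemma set_integral_real_bounded:
  fixes f :: "'a \<Rightarrow> real"
  assumes "0 \<le> B" "(\<integral>\<^sup>+x\<in>S. ennreal (f x) \<partial>M) \<le> ennreal B"
  shows "(\<integral>x\<in>S. f x \<partial>M) \<le> B"
  unfolding set_lebesgue_integral_def
proof (rule integral_real_bounded[OF assms(1)])
  have "(\<integral>\<^sup>+x. ennreal (indicator S x *\<^sub>R f x) \<partial>M) = (\<integral>\<^sup>+x\<in>S. ennreal (f x) \<partial>M)"
    by (intro nn_integral_cong) (simp split: split_indicator)
  then show "(\<integral>\<^sup>+x. ennreal (indicator S x *\<^sub>R f x) \<partial>M) \<le> ennreal B"
    using assms(2) by simp
qed

lemma set_nn_integral_eq_set_integral:
  fixes f :: "'a \<Rightarrow> real"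
  assumes "set_integrable M S f" "\<And>x. x \<in> S \<Longrightarrow> 0 \<le> f x"
  shows "(\<integral>\<^sup>+x\<in>S. ennreal (f x) \<partial>M) = ennreal (\<integral>x\<in>S. f x \<partial>M)"
proof -
  have "(\<integral>\<^sup>+x\<in>S. ennreal (f x) \<partial>M) = (\<integral>\<^sup>+x. ennreal (indicator S x *\<^sub>R f x) \<partial>M)"
    by (intro nn_integral_cong) (simp split: split_indicator)
  also have "\<dots> = ennreal (\<integral>x\<in>S. f x \<partial>M)"
    using assms unfolding set_integrable_def set_lebesgue_integral_def
    by (intro nn_integral_eq_integral) (auto split: split_indicator)
  finally show ?thesis .
qed

lemma set_integral_mono_set_nn_integral:
  fixes f g :: "'a \<Rightarrow> real"
  assumes "set_integrable M T g" "\<And>x. x \<in> T \<Longrightarrow> 0 \<le> g x"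
    and "(\<integral>\<^sup>+x\<in>S. ennreal (f x) \<partial>M) \<le> (\<integral>\<^sup>+x\<in>T. ennreal (g x) \<partial>M)"
  shows "(\<integral>x\<in>S. f x \<partial>M) \<le> (\<integral>x\<in>T. g x \<partial>M)"
proof (rule set_integral_real_bounded)
  show "0 \<le> (\<integral>x\<in>T. g x \<partial>M)"
    using assms(2) unfolding set_lebesgue_integral_def
    by (intro Bochner_Integration.integral_nonneg) (simp split: split_indicator)
  show "(\<integral>\<^sup>+x\<in>S. ennreal (f x) \<partial>M) \<le> ennreal (\<integral>x\<in>T. g x \<partial>M)"
    using assms(3) set_nn_integral_eq_set_integral[OF assms(1,2)] by simp
qed

lemma set_integrable_atLeast_FTC:
  fixes f F :: "real \<Rightarrow> real"
  assumes [measurable]: "f \<in> borel_measurable borel"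
    and "\<And>x. a \<le> x \<Longrightarrow> DERIV F x :> f x" "\<And>x. a \<le> x \<Longrightarrow> 0 \<le> f x"
    and "(F \<longlongrightarrow> L) at_top"
  shows "set_integrable lborel {a..} f"
  unfolding set_integrable_def
proof (rule integrableI_nn_integral_finite)
  show "(\<integral>\<^sup>+x. ennreal (indicator {a..} x *\<^sub>R f x) \<partial>lborel) = ennreal (L - F a)"
  proof -
    have "(\<integral>\<^sup>+x. ennreal (indicator {a..} x *\<^sub>R f x) \<partial>lborel) = (\<integral>\<^sup>+x\<in>{a..}. ennreal (f x) \<partial>lborel)"
      by (intro nn_integral_cong) (simp split: split_indicator)
    also have "\<dots> = ennreal (L - F a)"
      using nn_integral_FTC_atLeast[of f a F L] assms by simp
    finally show ?thesis .
  qed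
qed (use assms(3) in \<open>auto split: split_indicator\<close>)

lemma set_integrable_exp_atLeast:
  fixes k :: real
  assumes "0 < k"
  shows "set_integrable lborel {a..} (\<lambda>t. exp (-k*t))"
proof (rule set_integrable_atLeast_FTC)
  show "DERIV (\<lambda>t. - exp (-k*t)/k) t :> exp (-k*t)" for t
    using assms by (auto intro!: derivative_eq_intros)
  show "((\<lambda>t. - exp (-k*t)/k) \<longlongrightarrow> 0) at_top"
    using assms by real_asymp
qed auto

lemma set_integrable_gaussian_moment_atLeast:
  fixes k :: real
  assumes "0 < k" "0 \<le> a"
  shows "set_integrable lborel {a..} (\<lambda>t. t * exp (-k*t^2))"
proof (rule set_integrable_atLeast_FTC)
  show "DERIV (\<lambda>t. - exp (-k*t^2)/(2*k)) t :> t * exp (-k*t^2)" for t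
    using assms by (auto intro!: derivative_eq_intros)
  show "((\<lambda>t. - exp (-k*t^2)/(2*k)) \<longlongrightarrow> 0) at_top"
    using assms by real_asymp
qed (use assms in auto)

lemma set_integrable_exp_square_atLeast:
  fixes k :: real
  assumes "0 < k" "0 < a"
  shows "set_integrable lborel {a..} (\<lambda>t. exp (-k*t^2))"
proof (rule set_integrable_bound)
  show "set_integrable lborel {a..} (\<lambda>t. exp (-(k*a)*t))"
    using assms by (intro set_integrable_exp_atLeast) simp
  have "exp (-k*t^2) \<le> exp (-(k*a)*t)" if "a \<le> t" for t
  proof -
    have "k * (a * t) \<le> k * (t * t)"
      using that assms by (intro mult_left_mono mult_right_mono) auto
    then show ?thesis
      by (simp add: power2_eq_square mult_ac)
  qed
  then show "AE t in lborel. t \<in> {a..} \<longrightarrow> norm (exp (-k*t^2)) \<le> norm (exp (-(k*a)*t))"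
    by auto
qed (auto simp: set_borel_measurable_def)

lemma set_nn_integral_Ioc_le:
  fixes f :: "real \<Rightarrow> ennreal"
  assumes [measurable]: "f \<in> borel_measurable borel"
    and le: "\<And>e. a < e \<Longrightarrow> e \<le> b \<Longrightarrow> (\<integral>\<^sup>+x\<in>{e..b}. f x \<partial>lborel) \<le> B"
  shows "(\<integral>\<^sup>+x\<in>{a<..b}. f x \<partial>lborel) \<le> B"
proof (cases "a < b")
  case True
  define A where "A n = {a + (b - a)/Suc n..b}" for n
  have step: "0 < (b - a)/Suc n" "(b - a)/Suc n \<le> b - a" for n
    using True by (auto simp: divide_le_eq)
  have union: "{a<..b} = (\<Union>n. A n)"
  proof (intro equalityI subsetI)
    fix x assume x: "x \<in> {a<..b}"
    obtain n where "(b - a)/(x - a) < Suc n"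
      using reals_Archimedean2 less_Suc_eq of_nat_less_iff by (metis less_trans)
    then have "(b - a)/Suc n < x - a"
      using x by (simp add: divide_less_eq mult.commute)
    then have "x \<in> A n"
      using x by (simp add: A_def)
    then show "x \<in> (\<Union>n. A n)" by blast
  next
    fix x assume "x \<in> (\<Union>n. A n)"
    then show "x \<in> {a<..b}"
      using step by (auto simp: A_def less_le_trans[rotated])
  qed
  have "incseq A"
  proof (rule incseq_SucI)
    fix n
    have "(b - a)/Suc (Suc n) \<le> (b - a)/Suc n"
      using True by (intro divide_left_mono) auto
    then show "A n \<subseteq> A (Suc n)"
      by (auto simp: A_def)
  qed
  have "(\<integral>\<^sup>+x\<in>{a<..b}. f x \<partial>lborel) = emeasure (density lborel f) (\<Union>n. A n)"
    by (simp add: emeasure_density flip: union)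
  also have "\<dots> = (SUP n. emeasure (density lborel f) (A n))"
    by (intro SUP_emeasure_incseq[symmetric] \<open>incseq A\<close>) (auto simp: A_def)
  also have "\<dots> \<le> B"
  proof (rule SUP_least)
    fix n
    show "emeasure (density lborel f) (A n) \<le> B"
      using le[of "a + (b - a)/Suc n"] step[of n] by (simp add: emeasure_density A_def)
  qed
  finally show ?thesis .
qed simp

lemma set_nn_integral_reflect:
  fixes f :: "real \<Rightarrow> ennreal"
  assumes "f \<in> borel_measurable borel"
  shows "(\<integral>\<^sup>+x\<in>{a..}. f (-x) \<partial>lborel) = (\<integral>\<^sup>+x\<in>{..-a}. f x \<partial>lborel)"
  using nn_integral_real_affine[of "\<lambda>x. f x * indicator {..-a} x" "-1" 0] assms
  by (auto intro!: nn_integral_cong split: split_indicator)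

section \<open>The inverse-gamma density\<close>

lemma invgamma_dens_measurable [measurable]: "invgamma_dens \<alpha> \<in> borel_measurable borel"
  unfolding invgamma_dens_def by measurable

lemma invgamma_dens_nonneg: "0 < \<alpha> \<Longrightarrow> 0 \<le> invgamma_dens \<alpha> u"
  unfolding invgamma_dens_def by simp

lemma invgamma_dens_exp:
  "invgamma_dens \<alpha> (exp y) * exp y = invgamma_dens \<alpha> 1 * exp (-\<alpha> * (exp (-y) + y - 1))"
proof -
  have "exp y powr (1 + \<alpha>) = exp ((1 + \<alpha>) * y)" "-\<alpha> / exp y = -\<alpha> * exp (-y)"
    by (simp_all add: powr_def exp_minus divide_inverse)
  then have "exp (-\<alpha> / exp y) / exp y powr (1 + \<alpha>) * exp y = exp (-\<alpha> * exp (-y) - (1 + \<alpha>) * y + y)"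
    by (simp add: exp_diff exp_add)
  also have "\<dots> = exp (-\<alpha>) * exp (-\<alpha> * (exp (-y) + y - 1))"
    by (simp flip: exp_add) (simp add: algebra_simps)
  finally have eq: "exp (-\<alpha> / exp y) / exp y powr (1 + \<alpha>) * exp y = exp (-\<alpha>) * exp (-\<alpha> * (exp (-y) + y - 1))" .
  show ?thesis
    unfolding invgamma_dens_def mult.assoc eq by simp
qed

lemma invgamma_dens_one_le:
  assumes "0 < \<alpha>"
  shows "invgamma_dens \<alpha> 1 \<le> sqrt \<alpha>"
proof -
  have "Gamma (\<alpha> + 1) = sqrt \<alpha> * sqrt \<alpha> * Gamma \<alpha>"
    using assms Gamma_plus1_pos[of \<alpha>] by simp
  then have "sqrt \<alpha> * (\<alpha> powr \<alpha> * exp (-\<alpha>)) \<le> sqrt \<alpha> * (sqrt \<alpha> * Gamma \<alpha>)"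
    using Gamma_plus_one_ge[OF assms] by (simp add: mult_ac)
  then have "\<alpha> powr \<alpha> * exp (-\<alpha>) \<le> sqrt \<alpha> * Gamma \<alpha>"
    using assms by simp
  then show ?thesis
    using assms by (simp add: invgamma_dens_def divide_le_eq mult.commute)
qed

lemma invgamma_dens_le_powr:
  assumes "0 < \<alpha>" "0 < u"
  shows "invgamma_dens \<alpha> u \<le> \<alpha> powr \<alpha> / Gamma \<alpha> * u powr (-\<alpha> - 1)"
proof -
  have "exp (-\<alpha> / u) / u powr (1 + \<alpha>) \<le> 1 / u powr (1 + \<alpha>)"
    using assms by (intro divide_right_mono) auto
  also have "\<dots> = u powr (-\<alpha> - 1)"
  proof -
    have "-\<alpha> - 1 = -(1 + \<alpha>)" by simp
    then show ?thesis by (simp only: powr_minus_divide)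
  qed
  finally show ?thesis
    using assms unfolding invgamma_dens_def by (intro mult_left_mono) auto
qed

lemma invgamma_upper_tail_le:
  assumes "0 < \<alpha>" "0 < K"
  shows "(\<integral>u\<in>{K..}. invgamma_dens \<alpha> u \<partial>lborel) \<le> \<alpha> powr \<alpha> / Gamma (\<alpha> + 1) * (1 / K powr \<alpha>)"
proof (rule set_integral_real_bounded)
  define C where "C = \<alpha> powr \<alpha> / Gamma \<alpha>"
  have C: "0 < C" "C / \<alpha> = \<alpha> powr \<alpha> / Gamma (\<alpha> + 1)"
    using assms Gamma_plus1_pos[of \<alpha>] by (auto simp: C_def)
  show "0 \<le> \<alpha> powr \<alpha> / Gamma (\<alpha> + 1) * (1 / K powr \<alpha>)"
    using assms by simp
  have "(\<integral>\<^sup>+u\<in>{K..}. ennreal (invgamma_dens \<alpha> u) \<partial>lborel)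
      \<le> (\<integral>\<^sup>+u\<in>{K..}. ennreal (C * u powr (-\<alpha> - 1)) \<partial>lborel)"
    using assms invgamma_dens_le_powr[OF assms(1)]
    by (intro nn_integral_mono) (auto simp: C_def split: split_indicator intro!: ennreal_leI)
  also have "\<dots> = ennreal (0 - (- C / \<alpha> * K powr (-\<alpha>)))"
  proof (rule nn_integral_FTC_atLeast)
    show "DERIV (\<lambda>u. - C / \<alpha> * u powr (-\<alpha>)) u :> C * u powr (-\<alpha> - 1)" if "K \<le> u" for u
      using that assms by (auto intro!: derivative_eq_intros simp: field_simps)
    show "((\<lambda>u. - C / \<alpha> * u powr (-\<alpha>)) \<longlongrightarrow> 0) at_top"
      using assms by real_asymp
  qed (use C in auto)
  also have "\<dots> = ennreal (\<alpha> powr \<alpha> / Gamma (\<alpha> + 1) * (1 / K powr \<alpha>))"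
    using assms C by (simp add: powr_minus_divide)
  finally show "(\<integral>\<^sup>+u\<in>{K..}. ennreal (invgamma_dens \<alpha> u) \<partial>lborel) \<le> \<dots>" .
qed

lemma powr_div_Gamma_plus_one_le:
  assumes "0 < \<alpha>" "0 < K"
  shows "\<alpha> powr \<alpha> / Gamma (\<alpha> + 1) * (1 / K powr \<alpha>) \<le> 1 / sqrt \<alpha> * (1 / (K / exp 1) powr \<alpha>)"
proof -
  have "\<alpha> powr \<alpha> / Gamma (\<alpha> + 1) \<le> exp \<alpha> / sqrt \<alpha>"
    using Gamma_plus_one_ge[OF assms(1)] assms by (simp add: field_simps exp_minus)
  then have "\<alpha> powr \<alpha> / Gamma (\<alpha> + 1) * (1 / K powr \<alpha>) \<le> exp \<alpha> / sqrt \<alpha> * (1 / K powr \<alpha>)"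
    using assms by (intro mult_right_mono) auto
  also have "\<dots> = 1 / sqrt \<alpha> * (1 / (K / exp 1) powr \<alpha>)"
    using assms by (simp add: powr_def ln_div algebra_simps exp_diff)
  finally show ?thesis .
qed

lemma invgamma_dens_exp_scaled_le:
  assumes "0 < \<alpha>" "0 < L" "0 \<le> M" "1 + M \<le> K" "1 \<le> s" "s * L \<le> M"
  shows "invgamma_dens \<alpha> (exp (s * L)) * (L * exp (s * L))
    \<le> K * (s * sqrt \<alpha> * (L / (1 + M)) * exp (- (s^2/2) * \<alpha> * L^2 / (1 + M)^2))"
proof -
  define y where "y = s * L"
  have y: "0 \<le> y" "y \<le> M"
    using assms by (auto simp: y_def)
  have "y^2/(2*(1 + M)^2) \<le> y^2/(2*(1 + y))"
  proof (intro divide_left_mono)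
    have "1 + y \<le> 1 + M" using y by simp
    also have "\<dots> \<le> (1 + M)^2" using assms(3) by (simp add: power2_eq_square)
    finally show "2*(1 + y) \<le> 2*(1 + M)^2" by simp
  qed (use y in auto)
  also have "\<dots> \<le> exp (-y) + y - 1"
    by (rule exp_minus_add_self_ge[OF y(1)])
  finally have "\<alpha> * (y^2/(2*(1 + M)^2)) \<le> \<alpha> * (exp (-y) + y - 1)"
    using assms(1) by (intro mult_left_mono) auto
  moreover have "- (s^2/2) * \<alpha> * L^2 / (1 + M)^2 = - (\<alpha> * (y^2/(2*(1 + M)^2)))"
    by (simp add: y_def power_mult_distrib)
  ultimately have exponent: "-\<alpha> * (exp (-y) + y - 1) \<le> - (s^2/2) * \<alpha> * L^2 / (1 + M)^2"
    by linarith
  have "1 + M \<le> K * s"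
    using assms order_trans[OF assms(4), of "K * s"] by (simp add: mult_le_cancel_left1)
  then have "(1 + M) * (sqrt \<alpha> * L / (1 + M)) \<le> (K * s) * (sqrt \<alpha> * L / (1 + M))"
    using assms by (intro mult_right_mono) auto
  then have scale: "sqrt \<alpha> * L \<le> K * (s * sqrt \<alpha> * (L / (1 + M)))"
    using assms(3) by (simp add: mult_ac)
  have "invgamma_dens \<alpha> (exp y) * (L * exp y) = L * (invgamma_dens \<alpha> 1 * exp (-\<alpha> * (exp (-y) + y - 1)))"
    by (subst invgamma_dens_exp[symmetric]) (simp add: mult_ac)
  also have "\<dots> \<le> L * (sqrt \<alpha> * exp (- (s^2/2) * \<alpha> * L^2 / (1 + M)^2))"
    using invgamma_dens_one_le[OF assms(1)] exponent assms(2)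
    by (intro mult_left_mono mult_mono) (use assms(1) in \<open>simp_all add: invgamma_dens_nonneg\<close>)
  also have "\<dots> \<le> K * (s * sqrt \<alpha> * (L / (1 + M)) * exp (- (s^2/2) * \<alpha> * L^2 / (1 + M)^2))"
    using mult_right_mono[OF scale, of "exp (- (s^2/2) * \<alpha> * L^2 / (1 + M)^2)"]
    by (simp add: mult_ac)
  finally show ?thesis by (simp add: y_def)
qed

lemma invgamma_nn_integral_exp_le:
  assumes "0 < \<alpha>" "0 < L" "L \<le> M" "1 + M \<le> K"
  shows "(\<integral>\<^sup>+u\<in>{exp L..exp M}. ennreal (invgamma_dens \<alpha> u) \<partial>lborel)
    \<le> (\<integral>\<^sup>+s\<in>{1..}. ennreal (K * (s * sqrt \<alpha> * (L / (1 + M))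
          * exp (- (s^2/2) * \<alpha> * L^2 / (1 + M)^2))) \<partial>lborel)"
proof -
  have "(\<integral>\<^sup>+u\<in>{exp L..exp M}. ennreal (invgamma_dens \<alpha> u) \<partial>lborel)
      = (\<integral>\<^sup>+u. ennreal (invgamma_dens \<alpha> u * indicator {exp (1 * L)..exp (M / L * L)} u) \<partial>lborel)"
    using assms(2) by (intro nn_integral_cong) (simp split: split_indicator)
  also have "\<dots> = (\<integral>\<^sup>+s. ennreal (invgamma_dens \<alpha> (exp (s * L)) * (L * exp (s * L)) * indicator {1..M / L} s) \<partial>lborel)"
    using assms by (intro nn_integral_substitution)
      (auto intro!: derivative_eq_intros continuous_intros simp: set_borel_measurable_def)
  also have "\<dots> \<le> (\<integral>\<^sup>+s\<in>{1..}. ennreal (K * (s * sqrt \<alpha> * (L / (1 + M))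
          * exp (- (s^2/2) * \<alpha> * L^2 / (1 + M)^2))) \<partial>lborel)"
    using invgamma_dens_exp_scaled_le[OF assms(1,2) _ assms(4)] assms
    by (intro nn_integral_mono) (auto simp: field_simps split: split_indicator intro!: ennreal_leI)
  finally show ?thesis .
qed

lemma invgamma_Icc_le:
  assumes "0 < \<alpha>" "0 < \<Delta>" "1 + \<Delta> < K"
  shows "(\<integral>u\<in>{1+\<Delta>..K}. invgamma_dens \<alpha> u \<partial>lborel)
    \<le> K * (\<integral>t\<in>{..-1}. \<bar>t\<bar> * sqrt \<alpha> * (ln (1+\<Delta>) / (1 + ln K))
              * exp (- (\<bar>t\<bar>^2/2) * \<alpha> * (ln (1+\<Delta>))^2 / (1 + ln K)^2) \<partial>lborel)"
proof -
  define L where "L = ln (1 + \<Delta>)"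
  define M where "M = ln K"
  define H where "H s = s * sqrt \<alpha> * (L / (1 + M)) * exp (- (s^2/2) * \<alpha> * L^2 / (1 + M)^2)" for s
  have K: "0 < K" and L: "0 < L" and LM: "L < M" and MK: "1 + M \<le> K"
    using assms ln_le_minus_one[of K] by (auto simp: L_def M_def)
  have reflected: "{x. -x \<in> {..-1::real}} = {1..}"
    by auto
  have "(\<integral>t\<in>{..-1}. \<bar>t\<bar> * sqrt \<alpha> * (ln (1+\<Delta>) / (1 + ln K))
           * exp (- (\<bar>t\<bar>^2/2) * \<alpha> * (ln (1+\<Delta>))^2 / (1 + ln K)^2) \<partial>lborel)
      = (\<integral>s\<in>{1..}. H s \<partial>lborel)"
    by (subst set_integral_reflect, subst reflected, intro set_lebesgue_integral_cong)
       (auto simp: H_def L_def M_def)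
  then have rhs: "K * (\<integral>t\<in>{..-1}. \<bar>t\<bar> * sqrt \<alpha> * (ln (1+\<Delta>) / (1 + ln K))
           * exp (- (\<bar>t\<bar>^2/2) * \<alpha> * (ln (1+\<Delta>))^2 / (1 + ln K)^2) \<partial>lborel)
      = (\<integral>s\<in>{1..}. K * H s \<partial>lborel)"
    by simp
  have H_nonneg: "0 \<le> K * H s" if "s \<in> {1..}" for s
    using that assms K L LM by (simp add: H_def)
  have "set_integrable lborel {1..} (\<lambda>s. K * H s)"
  proof (rule set_integrable_bound)
    define k where "k = \<alpha> * L^2 / (2 * (1 + M)^2)"
    have "0 < k"
      using assms L LM by (simp add: k_def)
    then show "set_integrable lborel {1..} (\<lambda>s. K * sqrt \<alpha> * (L / (1 + M)) * (s * exp ((-k) * s^2)))"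
      by (intro set_integrable_mult_right set_integrable_gaussian_moment_atLeast) auto
    show "AE s in lborel. s \<in> {1..} \<longrightarrow> norm (K * H s) \<le> norm (K * sqrt \<alpha> * (L / (1 + M)) * (s * exp ((-k) * s^2)))"
      using H_nonneg by (auto simp: H_def k_def mult_ac)
  qed (auto simp: H_def set_borel_measurable_def)
  moreover have "(\<integral>\<^sup>+u\<in>{1+\<Delta>..K}. ennreal (invgamma_dens \<alpha> u) \<partial>lborel)
      \<le> (\<integral>\<^sup>+s\<in>{1..}. ennreal (K * H s) \<partial>lborel)"
    using invgamma_nn_integral_exp_le[OF assms(1) L _ MK] LM assms K
    by (simp add: H_def L_def M_def)
  ultimately show ?thesis
    unfolding rhs using H_nonneg by (intro set_integral_mono_set_nn_integral)
qed

lemma invgamma_dens_inverse_scaled_le: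
  assumes "0 < \<alpha>" "0 \<le> w"
  shows "invgamma_dens \<alpha> (1/(1 + w)) * (1/(1 + w)) \<le> sqrt \<alpha> * exp (-\<alpha> * (w^2/(2*(1 + w))))"
proof -
  define x where "x = 1 + w"
  have x: "1 \<le> x" "x = 1 + w"
    using assms by (simp_all add: x_def)
  have "w^2/(2*x) \<le> x - ln x - 1"
    using ln_le_half_diff_inverse[OF x(1)] x by (simp add: field_simps power2_eq_square)
  then have "\<alpha> * (w^2/(2*x)) \<le> \<alpha> * (x - ln x - 1)"
    using assms(1) by (intro mult_left_mono) auto
  then have "exp (-\<alpha> * (x - ln x - 1)) \<le> exp (-\<alpha> * (w^2/(2*x)))"
    by simp
  moreover have "invgamma_dens \<alpha> (1/x) * (1/x) = invgamma_dens \<alpha> 1 * exp (-\<alpha> * (x - ln x - 1))"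
    using invgamma_dens_exp[of \<alpha> "- ln x"] x by (simp add: exp_minus inverse_eq_divide)
  ultimately show ?thesis
    using invgamma_dens_one_le[OF assms(1)] assms(1) unfolding x_def
    by (auto intro!: mult_mono simp: invgamma_dens_nonneg)
qed

lemma invgamma_dens_inverse_le:
  assumes "0 < \<alpha>" "0 < \<Delta>" "1 \<le> s"
  shows "invgamma_dens \<alpha> (1 / (1 + s * \<Delta>)) * (\<Delta> / (1 + s * \<Delta>)^2)
    \<le> sqrt \<alpha> * \<Delta> * exp (- (s^2/4) * (sqrt \<alpha> * \<Delta>)^2) + sqrt (\<alpha> * \<Delta>) * exp (- (s/4) * \<alpha> * \<Delta>)"
proof -
  define w where "w = s * \<Delta>"
  define x where "x = 1 + w"
  have w: "\<Delta> \<le> w" and x: "1 \<le> x" "x = 1 + w"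
    using assms by (auto simp: w_def x_def)
  have bound: "invgamma_dens \<alpha> (1/x) * (\<Delta>/x^2) \<le> sqrt \<alpha> * (\<Delta>/x) * exp (-\<alpha> * (w^2/(2*x)))"
    using mult_left_mono[OF invgamma_dens_inverse_scaled_le[OF assms(1), of w], of "\<Delta>/x"] assms(2) w x
    by (simp add: power2_eq_square mult_ac)
  have G1: "0 \<le> sqrt \<alpha> * \<Delta> * exp (- (s^2/4) * (sqrt \<alpha> * \<Delta>)^2)"
    and G2: "0 \<le> sqrt (\<alpha> * \<Delta>) * exp (- (s/4) * \<alpha> * \<Delta>)"
    using assms by auto
  show ?thesis
  proof (cases "w \<le> 1")
    case True
    then have "w^2/4 \<le> w^2/(2*x)"
      using x by (intro divide_left_mono) auto
    then have "\<alpha> * (w^2/4) \<le> \<alpha> * (w^2/(2*x))"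
      using assms(1) by (intro mult_left_mono) auto
    then have "exp (-\<alpha> * (w^2/(2*x))) \<le> exp (-\<alpha> * (w^2/4))"
      by simp
    moreover have "\<Delta>/x \<le> \<Delta>"
      using assms(2) x by (simp add: divide_le_eq)
    ultimately have "sqrt \<alpha> * (\<Delta>/x) * exp (-\<alpha> * (w^2/(2*x))) \<le> sqrt \<alpha> * \<Delta> * exp (-\<alpha> * (w^2/4))"
      using assms x by (intro mult_mono) auto
    also have "\<dots> = sqrt \<alpha> * \<Delta> * exp (- (s^2/4) * (sqrt \<alpha> * \<Delta>)^2)"
      using assms(1) by (simp add: w_def power_mult_distrib)
    finally show ?thesis
      using bound G2 unfolding x(2) w_def by linarith
  next
    case False
    then have "w/4 \<le> w^2/(2*x)"
      using x by (simp add: field_simps power2_eq_square)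
    then have "\<alpha> * (w/4) \<le> \<alpha> * (w^2/(2*x))"
      using assms(1) by (intro mult_left_mono) auto
    then have "exp (-\<alpha> * (w^2/(2*x))) \<le> exp (-\<alpha> * (w/4))"
      by simp
    moreover have "sqrt \<alpha> * (\<Delta>/x) \<le> sqrt (\<alpha> * \<Delta>)"
      using divide_le_sqrt[of \<Delta> x] mult_left_mono[of "\<Delta>/x" "sqrt \<Delta>" "sqrt \<alpha>"] assms w x
      by (simp add: real_sqrt_mult)
    ultimately have "sqrt \<alpha> * (\<Delta>/x) * exp (-\<alpha> * (w^2/(2*x))) \<le> sqrt (\<alpha> * \<Delta>) * exp (-\<alpha> * (w/4))"
      using assms x by (intro mult_mono) auto
    also have "\<dots> = sqrt (\<alpha> * \<Delta>) * exp (- (s/4) * \<alpha> * \<Delta>)"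
      by (simp add: w_def)
    finally show ?thesis
      using bound G1 unfolding x(2) w_def by linarith
  qed
qed

text \<open>The substitution rule needs an increasing change of variables, hence
  \<open>u = 1/(1 - t\<Delta>)\<close> with \<open>t \<le> -1\<close>, followed by the reflection \<open>s = -t\<close>.\<close>
lemma invgamma_nn_integral_inverse_le:
  assumes "0 < \<alpha>" "0 < \<Delta>" "0 < e" "e \<le> 1/(1+\<Delta>)"
  shows "(\<integral>\<^sup>+u\<in>{e..1/(1+\<Delta>)}. ennreal (invgamma_dens \<alpha> u) \<partial>lborel)
    \<le> (\<integral>\<^sup>+s\<in>{1..}. ennreal (sqrt \<alpha> * \<Delta> * exp (- (s^2/4) * (sqrt \<alpha> * \<Delta>)^2)
          + sqrt (\<alpha> * \<Delta>) * exp (- (s/4) * \<alpha> * \<Delta>)) \<partial>lborel)"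
proof -
  define G where "G s = sqrt \<alpha> * \<Delta> * exp (- (s^2/4) * (sqrt \<alpha> * \<Delta>)^2)
    + sqrt (\<alpha> * \<Delta>) * exp (- (s/4) * \<alpha> * \<Delta>)" for s
  define t0 where "t0 = (1 - 1/e)/\<Delta>"
  define g where "g t = 1/(1 - t*\<Delta>)" for t
  define g' where "g' t = \<Delta>/(1 - t*\<Delta>)^2" for t
  have pos: "0 < 1 - t*\<Delta>" if "t \<le> -1" for t
    using mult_right_mono[OF that, of \<Delta>] assms by simp
  have "1 + \<Delta> \<le> 1/e"
    using assms by (simp add: field_simps)
  then have t0: "t0 \<le> -1" "g t0 = e" "g (-1) = 1/(1+\<Delta>)"
    using assms by (auto simp: t0_def g_def field_simps)
  have "(\<integral>\<^sup>+u\<in>{e..1/(1+\<Delta>)}. ennreal (invgamma_dens \<alpha> u) \<partial>lborel)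
      = (\<integral>\<^sup>+u. ennreal (invgamma_dens \<alpha> u * indicator {g t0..g (-1)} u) \<partial>lborel)"
    using t0 by (intro nn_integral_cong) (simp split: split_indicator)
  also have "\<dots> = (\<integral>\<^sup>+t. ennreal (invgamma_dens \<alpha> (g t) * g' t * indicator {t0..-1} t) \<partial>lborel)"
  proof (rule nn_integral_substitution)
    show "(g has_real_derivative g' t) (at t)" if "t \<in> {t0..-1}" for t
      using pos[of t] that unfolding g_def g'_def
      by (auto intro!: derivative_eq_intros simp: power2_eq_square)
    show "continuous_on {t0..-1} g'"
      unfolding g'_def using pos by (intro continuous_intros) force
  qed (use t0 assms in \<open>auto simp: g'_def set_borel_measurable_def\<close>)
  also have "\<dots> \<le> (\<integral>\<^sup>+t\<in>{..-1}. ennreal (G (-t)) \<partial>lborel)"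
    using invgamma_dens_inverse_le[OF assms(1,2), of "-t" for t]
    by (intro nn_integral_mono) (auto simp: g_def g'_def G_def split: split_indicator intro!: ennreal_leI)
  also have "\<dots> = (\<integral>\<^sup>+s\<in>{1..}. ennreal (G s) \<partial>lborel)"
    by (subst set_nn_integral_reflect[symmetric]) (auto simp: G_def)
  finally show ?thesis
    by (simp only: G_def)
qed

lemma invgamma_lower_tail_le:
  assumes "0 < \<alpha>" "0 < \<Delta>"
  shows "(\<integral>u\<in>{0<..1/(1+\<Delta>)}. invgamma_dens \<alpha> u \<partial>lborel)
    \<le> (\<integral>t\<in>{1..}. sqrt \<alpha> * \<Delta> * exp (- (t^2/4) * (sqrt \<alpha> * \<Delta>)^2) \<partial>lborel)
     + (\<integral>t\<in>{1..}. sqrt (\<alpha> * \<Delta>) * exp (- (t/4) * \<alpha> * \<Delta>) \<partial>lborel)"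
proof -
  define G1 where "G1 t = sqrt \<alpha> * \<Delta> * exp (- (t^2/4) * (sqrt \<alpha> * \<Delta>)^2)" for t
  define G2 where "G2 t = sqrt (\<alpha> * \<Delta>) * exp (- (t/4) * \<alpha> * \<Delta>)" for t
  have G1_eq: "G1 = (\<lambda>t. sqrt \<alpha> * \<Delta> * exp (-(\<alpha> * \<Delta>^2/4) * t^2))"
    and G2_eq: "G2 = (\<lambda>t. sqrt (\<alpha> * \<Delta>) * exp (- (\<alpha> * \<Delta>/4) * t))"
    using assms by (simp_all add: G1_def G2_def fun_eq_iff power_mult_distrib field_simps)
  have int1: "set_integrable lborel {1..} G1"
    unfolding G1_eq using assms by (intro set_integrable_mult_right set_integrable_exp_square_atLeast) auto
  have int2: "set_integrable lborel {1..} G2"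
    unfolding G2_eq using assms by (intro set_integrable_mult_right set_integrable_exp_atLeast) auto
  have G_nonneg: "0 \<le> G1 t + G2 t" for t
    using assms by (simp add: G1_def G2_def)
  have "(\<integral>\<^sup>+u\<in>{0<..1/(1+\<Delta>)}. ennreal (invgamma_dens \<alpha> u) \<partial>lborel)
      \<le> (\<integral>\<^sup>+t\<in>{1..}. ennreal (G1 t + G2 t) \<partial>lborel)"
  proof (rule set_nn_integral_Ioc_le)
    show "(\<integral>\<^sup>+u\<in>{e..1/(1+\<Delta>)}. ennreal (invgamma_dens \<alpha> u) \<partial>lborel)
        \<le> (\<integral>\<^sup>+t\<in>{1..}. ennreal (G1 t + G2 t) \<partial>lborel)" if "0 < e" "e \<le> 1/(1+\<Delta>)" for e
      using invgamma_nn_integral_inverse_le[OF assms that] by (simp only: G1_def G2_def)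
  qed measurable
  then have "(\<integral>u\<in>{0<..1/(1+\<Delta>)}. invgamma_dens \<alpha> u \<partial>lborel) \<le> (\<integral>t\<in>{1..}. G1 t + G2 t \<partial>lborel)"
    using int1 int2 G_nonneg by (intro set_integral_mono_set_nn_integral) auto
  also have "\<dots> = (\<integral>t\<in>{1..}. G1 t \<partial>lborel) + (\<integral>t\<in>{1..}. G2 t \<partial>lborel)"
    using int1 int2 by (rule set_integral_add)
  finally show ?thesis
    by (simp only: G1_def G2_def)
qed

theorem lemmaS6:
  fixes \<alpha> :: real
  assumes "\<alpha> > 0"
  shows "(\<forall>\<Delta>>0.
            (\<integral>u\<in>{0<..1/(1+\<Delta>)}. invgamma_dens \<alpha> u \<partial>lborel)
            \<le> (\<integral>t\<in>{1..}. sqrt \<alpha> * \<Delta> * exp (- (t^2/4) * (sqrt \<alpha> * \<Delta>)^2) \<partial>lborel)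
             + (\<integral>t\<in>{1..}. sqrt (\<alpha> * \<Delta>) * exp (- (t/4) * \<alpha> * \<Delta>) \<partial>lborel))
       \<and> (\<forall>\<Delta>>0. \<forall>K>1+\<Delta>.
            (\<integral>u\<in>{1+\<Delta>..K}. invgamma_dens \<alpha> u \<partial>lborel)
            \<le> K * (\<integral>t\<in>{..-1}. \<bar>t\<bar> * sqrt \<alpha> * (ln (1+\<Delta>) / (1 + ln K))
                   * exp (- (\<bar>t\<bar>^2/2) * \<alpha> * (ln (1+\<Delta>))^2 / (1 + ln K)^2) \<partial>lborel))
       \<and> (\<forall>K>0.
            (\<integral>u\<in>{K..}. invgamma_dens \<alpha> u \<partial>lborel)
            \<le> min (\<alpha> powr \<alpha> / Gamma (\<alpha> + 1) * (1 / K powr \<alpha>))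
                   (1 / sqrt \<alpha> * (1 / (K / exp 1) powr \<alpha>)))"
  using invgamma_lower_tail_le[OF assms] invgamma_Icc_le[OF assms]
    invgamma_upper_tail_le[OF assms] powr_div_Gamma_plus_one_le[OF assms]
  by (auto simp: min_absorb1)

end
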